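(* Let $\varepsilon\in[0,1]$ and $\delta\in[0,1/3]$. Any $(\varepsilon,\delta)$-DP (event-level) continual mechanism in the exact setting for incremental $\textsc{TopK}$ on a universe of $n$ elements and streams of length $T$ — i.e. one that outputs at each time $t$ estimates $a^t_1,\dots,a^t_n$ such that with probability at least $2/3$, for all $t\in[T]$ and all $k\in[n]$, $|a^t_k-\|f^t\|_{\mathrm{top}\text{-}k}|\le\alpha$ — must have additive error $\alpha=\Omega(\min\{T^{1/4},\sqrt n\})$.
   Context: Incremental streams over universe $[n]\cup\{\bot\}$: each update $u^t$ inserts one element of $[n]$ or is the empty element $\bot$ (no change); the frequency vector $f^t\in\mathbb N^n$ counts insertions of each element among $u^1,\dots,u^t$. For $f\in\mathbb R^n$ and $k\in[n]$, $\|f\|_{\mathrm{top}\text{-}k}=\sum_{i=1}^k|f_{\sigma(i)}|$ where $\sigma$ sorts so that $|f_{\sigma(1)}|\ge\dots\ge|f_{\sigma(n)}|$. A continual mechanism outputs after each update a value depending only on updates so far. Two streams are event-level neighboring if they differ in at most one time step; $(\varepsilon,\delta)$-DP means $\Pr[\mathcal A(u)\in S]\le e^\varepsilon\Pr[\mathcal A(v)\in S]+\delta$ for all neighbors $u,v$ and output sets $S$. *)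

theory Defs
  imports "HOL-Probability.Probability"
begin

text \<open>Streams: lists of updates; None is the empty update, Some i inserts element i.
  The universe [n] is represented as {0..<n}.\<close>

definition valid_stream :: "nat \<Rightarrow> nat \<Rightarrow> nat option list \<Rightarrow> bool" where
  "valid_stream n T u \<longleftrightarrow> length u = T \<and>
     (\<forall>x\<in>set u. case x of None \<Rightarrow> True | Some i \<Rightarrow> i < n)"

definition freq :: "nat option list \<Rightarrow> nat \<Rightarrow> nat \<Rightarrow> real" where
  "freq u t i = real (length (filter (\<lambda>x. x = Some i) (take t u)))"

definition topk :: "nat \<Rightarrow> (nat \<Rightarrow> real) \<Rightarrow> nat \<Rightarrow> real" where
  "topk n f k = sum_list (take k (rev (sort (map (\<lambda>i. \<bar>f i\<bar>) [0..<n]))))"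

definition neighbors :: "nat option list \<Rightarrow> nat option list \<Rightarrow> bool" where
  "neighbors u v \<longleftrightarrow> length u = length v \<and> card {j. j < length u \<and> u ! j \<noteq> v ! j} \<le> 1"

definition out_space :: "nat \<Rightarrow> nat \<Rightarrow> (nat \<Rightarrow> nat \<Rightarrow> real) measure" where
  "out_space T n = PiM {1..T} (\<lambda>_. PiM {1..n} (\<lambda>_. borel))"

definition mechanism :: "nat \<Rightarrow> nat \<Rightarrow> (nat option list \<Rightarrow> (nat \<Rightarrow> nat \<Rightarrow> real) measure) \<Rightarrow> bool" where
  "mechanism n T M \<longleftrightarrow> (\<forall>u. valid_stream n T u \<longrightarrow>
      prob_space (M u) \<and> sets (M u) = sets (out_space T n))"

definition continual :: "nat \<Rightarrow> nat \<Rightarrow> (nat option list \<Rightarrow> (nat \<Rightarrow> nat \<Rightarrow> real) measure) \<Rightarrow> bool" where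
  "continual n T M \<longleftrightarrow> (\<forall>u v t. valid_stream n T u \<longrightarrow> valid_stream n T v \<longrightarrow> t \<le> T \<longrightarrow>
      take t u = take t v \<longrightarrow>
      distr (M u) (out_space t n) (\<lambda>a. restrict a {1..t}) =
      distr (M v) (out_space t n) (\<lambda>a. restrict a {1..t}))"

definition event_dp :: "real \<Rightarrow> real \<Rightarrow> nat \<Rightarrow> nat \<Rightarrow> (nat option list \<Rightarrow> (nat \<Rightarrow> nat \<Rightarrow> real) measure) \<Rightarrow> bool" where
  "event_dp \<epsilon> \<delta> n T M \<longleftrightarrow> (\<forall>u v S. valid_stream n T u \<longrightarrow> valid_stream n T v \<longrightarrow> neighbors u v \<longrightarrow>
      S \<in> sets (out_space T n) \<longrightarrow>
      measure (M u) S \<le> exp \<epsilon> * measure (M v) S + \<delta>)"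

definition topk_accurate :: "real \<Rightarrow> nat \<Rightarrow> nat \<Rightarrow> (nat option list \<Rightarrow> (nat \<Rightarrow> nat \<Rightarrow> real) measure) \<Rightarrow> bool" where
  "topk_accurate \<alpha> n T M \<longleftrightarrow> (\<forall>u. valid_stream n T u \<longrightarrow>
      measure (M u) {a \<in> space (M u). \<forall>t\<in>{1..T}. \<forall>k\<in>{1..n}.
          \<bar>a t k - topk n (freq u t) k\<bar> \<le> \<alpha>} \<ge> 2/3)"

end

theory Submission
  imports Defs
begin

text \<open>A reconstruction attack. A secret x in {0,1}^d, d = 2^m of order min(n, sqrt T), is written
  into the stream by inserting j iff x_j holds. Then, for every row r of the d x d Walsh-Hadamard
  matrix, insertions are added so that the elements with a +1 in row r become exactly the heaviest
  ones; the top-k norm for k = number of these elements is then the sum of x over them plus a known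
  offset. The whole stream has length at most 3 d^2 <= T. Answers with error \<alpha> determine every
  Walsh coefficient of x up to 6 \<alpha>, hence, by Parseval, x up to Hamming distance 36 \<alpha>^2.
  On the other hand, averaging the privacy inequality over all secrets and all coordinates shows
  that an (\<epsilon>, \<delta>)-DP mechanism which pins x down to Hamming distance K must satisfy
  d (2/3 - \<delta>) <= K + e^\<epsilon> (K + 1). So d = O(\<alpha>^2), i.e. \<alpha> = \<Omega>(min(T^(1/4), sqrt n)).\<close>

section \<open>The Walsh-Hadamard matrix\<close>

text \<open>The Sylvester-Hadamard matrix of order 2^m: walsh m r j = (-1)^(number of common one-bits of r
  and j).\<close>
fun walsh :: "nat \<Rightarrow> nat \<Rightarrow> nat \<Rightarrow> real" where
  "walsh 0 r j = 1"
| "walsh (Suc m) r j = (if odd r \<and> odd j then -1 else 1) * walsh m (r div 2) (j div 2)"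

lemma walsh_cases: "walsh m r j = 1 \<or> walsh m r j = -1"
  by (induction m arbitrary: r j) auto

lemma walsh_row_0 [simp]: "walsh m 0 j = 1"
  by (induction m arbitrary: j) auto

lemma walsh_col_0 [simp]: "walsh m r 0 = 1"
  by (induction m arbitrary: r) auto

lemma sum_lessThan_double: "(\<Sum>r<2*N. g r) = (\<Sum>q<N. g (2*q) + g (Suc (2*q)))"
  by (induction N) (simp_all add: add.assoc)

lemma walsh_orthogonal:
  assumes "i < 2^m" "j < 2^m"
  shows "(\<Sum>r<2^m. walsh m r i * walsh m r j) = (if i = j then 2^m else 0)"
  using assms
proof (induction m arbitrary: i j)
  case 0
  then show ?case by simp
next
  case (Suc m)
  define s where "s k = (if odd k then -1 else 1 :: real)" for k :: nat
  have "(\<Sum>r<2^Suc m. walsh (Suc m) r i * walsh (Suc m) r j)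
      = (\<Sum>q<2^m. (1 + s i * s j) * (walsh m q (i div 2) * walsh m q (j div 2)))"
    by (simp add: sum_lessThan_double s_def algebra_simps)
  also have "\<dots> = (1 + s i * s j) * (if i div 2 = j div 2 then 2^m else 0)"
    using Suc by (simp add: sum_distrib_left[symmetric])
  also have "\<dots> = (if i = j then 2^Suc m else 0)"
  proof -
    have "i = j \<longleftrightarrow> i div 2 = j div 2 \<and> (odd i \<longleftrightarrow> odd j)"
      by (metis div_mult_mod_eq odd_iff_mod_2_eq_one not_mod_2_eq_0_eq_1)
    then show ?thesis by (auto simp: s_def)
  qed
  finally show ?case .
qed

lemma walsh_parseval:
  fixes z :: "nat \<Rightarrow> real"
  shows "(\<Sum>r<2^m. (\<Sum>j<2^m. walsh m r j * z j)\<^sup>2) = 2^m * (\<Sum>j<2^m. (z j)\<^sup>2)"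
proof -
  have "(\<Sum>r<2^m. (\<Sum>j<2^m. walsh m r j * z j)\<^sup>2)
      = (\<Sum>r<2^m. \<Sum>i<2^m. \<Sum>j<2^m. z i * z j * (walsh m r i * walsh m r j))"
    unfolding power2_eq_square sum_product by (intro sum.cong refl) (simp add: algebra_simps)
  also have "\<dots> = (\<Sum>i<2^m. \<Sum>r<2^m. \<Sum>j<2^m. z i * z j * (walsh m r i * walsh m r j))"
    by (rule sum.swap)
  also have "\<dots> = (\<Sum>i<2^m. \<Sum>j<2^m. \<Sum>r<2^m. z i * z j * (walsh m r i * walsh m r j))"
    by (intro sum.cong refl sum.swap)
  also have "\<dots> = (\<Sum>i<2^m. \<Sum>j<2^m. z i * z j * (\<Sum>r<2^m. walsh m r i * walsh m r j))"
    by (simp add: sum_distrib_left)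
  also have "\<dots> = (\<Sum>i<2^m. \<Sum>j<2^m. (if i = j then z i * z j * 2^m else 0))"
    by (intro sum.cong refl) (simp add: walsh_orthogonal)
  also have "\<dots> = (\<Sum>i<2^m. z i * z i * 2^m)"
    by (simp add: sum.delta)
  finally show ?thesis by (simp add: power2_eq_square sum_distrib_left algebra_simps)
qed

definition walsh_support :: "nat \<Rightarrow> nat \<Rightarrow> nat set" where
  "walsh_support m r = {j. j < 2^m \<and> walsh m r j = 1}"

lemma walsh_support_0 [simp]: "walsh_support m 0 = {..<2^m}"
  by (auto simp: walsh_support_def)

lemma walsh_row_sum_eq:
  "(\<Sum>j<2^m. walsh m r j * z j) = 2 * (\<Sum>j\<in>walsh_support m r. z j) - (\<Sum>j<2^m. z j)"
proof -
  have "(\<Sum>j\<in>walsh_support m r. z j) = (\<Sum>j<2^m. if walsh m r j = 1 then z j else 0)"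
    by (simp add: walsh_support_def sum.inter_filter[symmetric] Collect_conj_eq lessThan_def Int_commute)
  moreover have "walsh m r j * z j = 2 * (if walsh m r j = 1 then z j else 0) - z j" for j
    using walsh_cases[of m r j] by auto
  ultimately show ?thesis
    by (simp add: sum_subtractf sum_distrib_left)
qed

text \<open>By walsh_row_sum_eq every Walsh coefficient of z is then at most 3\<beta>; Parseval converts this
  into the bound on the energy of z.\<close>
lemma walsh_energy_le_of_support_sums:
  fixes z :: "nat \<Rightarrow> real"
  assumes sums: "\<And>r. r < 2^m \<Longrightarrow> \<bar>\<Sum>j\<in>walsh_support m r. z j\<bar> \<le> \<beta>"
  shows "(\<Sum>j<2^m. (z j)\<^sup>2) \<le> 9 * \<beta>\<^sup>2"
proof -
  have total: "\<bar>\<Sum>j<2^m. z j\<bar> \<le> \<beta>"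
    using sums[of 0] by simp
  have "(\<Sum>j<2^m. walsh m r j * z j)\<^sup>2 \<le> (3 * \<beta>)\<^sup>2" if "r < 2^m" for r
  proof (rule abs_le_square_iff[THEN iffD1])
    show "\<bar>\<Sum>j<2^m. walsh m r j * z j\<bar> \<le> \<bar>3 * \<beta>\<bar>"
      unfolding walsh_row_sum_eq using sums[OF that] total by linarith
  qed
  then have "(2::real)^m * (\<Sum>j<2^m. (z j)\<^sup>2) \<le> (\<Sum>r<(2::nat)^m. (3 * \<beta>)\<^sup>2)"
    unfolding walsh_parseval[symmetric] by (intro sum_mono) simp
  then show ?thesis
    by (simp add: power_mult_distrib)
qed

section \<open>Privacy prevents reconstruction\<close>

definition flip :: "bool list \<Rightarrow> nat \<Rightarrow> bool list" where
  "flip x i = x[i := \<not> x ! i]"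

lemma length_flip [simp]: "length (flip x i) = length x"
  by (simp add: flip_def)

lemma flip_flip [simp]: "flip (flip x i) i = x"
  by (cases "i < length x") (simp_all add: flip_def list_update_beyond)

lemma nth_flip: "j < length x \<Longrightarrow> flip x i ! j = (if j = i then \<not> x ! i else x ! j)"
  by (simp add: flip_def nth_list_update)

definition hamming :: "bool list \<Rightarrow> bool list \<Rightarrow> nat" where
  "hamming x y = card {j. j < length x \<and> x ! j \<noteq> y ! j}"

lemma (in prob_space) sum_prob_le_of_overlap:
  assumes "finite I" and events: "\<And>i. i \<in> I \<Longrightarrow> A i \<in> events"
    and overlap: "\<And>\<omega>. \<omega> \<in> space M \<Longrightarrow> real (card {i\<in>I. \<omega> \<in> A i}) \<le> C"
  shows "(\<Sum>i\<in>I. prob (A i)) \<le> C"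
proof -
  have integrable: "integrable M (indicator (A i) :: _ \<Rightarrow> real)" if "i \<in> I" for i
    using events[OF that] by (simp add: integrable_indicator_iff less_top[symmetric])
  have "(\<Sum>i\<in>I. prob (A i)) = (\<integral>\<omega>. (\<Sum>i\<in>I. indicator (A i) \<omega>) \<partial>M)"
    using events integrable by (simp add: Bochner_Integration.integral_sum)
  also have "\<dots> \<le> C"
  proof (rule integral_le_const)
    show "AE \<omega> in M. (\<Sum>i\<in>I. indicator (A i) \<omega>) \<le> C"
    proof (rule AE_I2)
      fix \<omega> assume "\<omega> \<in> space M"
      have "(\<Sum>i\<in>I. indicator (A i) \<omega> :: real) = real (card {i\<in>I. \<omega> \<in> A i})"
        using \<open>finite I\<close> by (simp add: indicator_def Int_def)
      then show "(\<Sum>i\<in>I. indicator (A i) \<omega>) \<le> C"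
        using overlap[OF \<open>\<omega> \<in> space M\<close>] by simp
    qed
  qed (use integrable in auto)
  finally show ?thesis .
qed

fun first_match :: "('b \<Rightarrow> 'a set) \<Rightarrow> 'b \<Rightarrow> 'b list \<Rightarrow> 'a \<Rightarrow> 'b" where
  "first_match C y0 [] a = y0"
| "first_match C y0 (y # ys) a = (if a \<in> C y then y else first_match C y0 ys a)"

lemma first_match_in: "first_match C y0 ys a \<in> insert y0 (set ys)"
  by (induction ys) auto

lemma first_match_mem: "\<exists>y\<in>set ys. a \<in> C y \<Longrightarrow> a \<in> C (first_match C y0 ys a)"
  by (induction ys) auto

lemma measurable_first_match:
  "(\<And>y. y \<in> set ys \<Longrightarrow> C y \<inter> space M \<in> sets M) \<Longrightarrow>
     first_match C y0 ys \<in> measurable M (count_space UNIV)"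
proof (induction ys)
  case Nil
  have "first_match C y0 [] = (\<lambda>_. y0)"
    by (simp add: fun_eq_iff)
  then show ?case
    by simp
next
  case (Cons y ys)
  have "(\<lambda>a. if a \<in> C y then y else first_match C y0 ys a) \<in> measurable M (count_space UNIV)"
    by (rule measurable_If_set) (use Cons in auto)
  then show ?case
    by (simp add: fun_eq_iff[symmetric])
qed

locale private_reconstruction =
  fixes \<Omega> :: "'a measure" and P :: "bool list \<Rightarrow> 'a measure" and C :: "bool list \<Rightarrow> 'a set"
    and d :: nat and \<epsilon> \<delta> \<beta> K :: real
  assumes prob_space_P: "length x = d \<Longrightarrow> prob_space (P x)"
    and sets_P: "length x = d \<Longrightarrow> sets (P x) = sets \<Omega>"
    and sets_C: "length x = d \<Longrightarrow> C x \<in> sets \<Omega>"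
    and accurate: "length x = d \<Longrightarrow> \<beta> \<le> measure (P x) (C x)"
    and privacy: "length x = d \<Longrightarrow> i < d \<Longrightarrow> S \<in> sets \<Omega> \<Longrightarrow>
                    measure (P x) S \<le> exp \<epsilon> * measure (P (flip x i)) S + \<delta>"
    and close: "length x = d \<Longrightarrow> length y = d \<Longrightarrow> a \<in> C x \<Longrightarrow> a \<in> C y \<Longrightarrow>
                  real (hamming x y) \<le> K"
    and K_nonneg: "0 \<le> K"
begin

text \<open>A secret whose accurate set contains the outcome, whenever there is one; searching a fixed
  list of all candidates makes this choice measurable.\<close>
definition decode :: "'a \<Rightarrow> bool list" where
  "decode = first_match C (replicate d False) (List.n_lists d [False, True])"

lemma length_decode: "length (decode a) = d"
  using first_match_in[of C "replicate d False" "List.n_lists d [False, True]" a]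
  by (auto simp: decode_def length_n_lists_elem)

lemma decode_mem: "a \<in> C y \<Longrightarrow> length y = d \<Longrightarrow> a \<in> C (decode a)"
  unfolding decode_def by (rule first_match_mem) (auto simp: set_n_lists)

lemma hamming_decode_le: "a \<in> C x \<Longrightarrow> length x = d \<Longrightarrow> real (hamming x (decode a)) \<le> K"
  using close length_decode decode_mem by blast

lemma sets_decode_pred: "{a \<in> space \<Omega>. Q (decode a)} \<in> sets \<Omega>"
proof -
  have "decode \<in> measurable \<Omega> (count_space UNIV)"
    unfolding decode_def
    by (rule measurable_first_match) (use sets_C in \<open>auto simp: set_n_lists\<close>)
  then have "decode -` {w. Q w} \<inter> space \<Omega> \<in> sets \<Omega>"
    by (rule measurable_sets) simp
  moreover have "decode -` {w. Q w} \<inter> space \<Omega> = {a \<in> space \<Omega>. Q (decode a)}"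
    by auto
  ultimately show ?thesis
    by simp
qed

definition agree :: "bool list \<Rightarrow> nat \<Rightarrow> 'a set" where
  "agree x i = C x \<inter> {a. decode a ! i = x ! i}"

definition disagree :: "bool list \<Rightarrow> nat \<Rightarrow> 'a set" where
  "disagree x i = C x \<inter> {a. decode a ! i \<noteq> x ! i}"

lemma sets_agree: "length x = d \<Longrightarrow> agree x i \<in> sets \<Omega>"
  and sets_disagree: "length x = d \<Longrightarrow> disagree x i \<in> sets \<Omega>"
proof -
  assume x: "length x = d"
  have "C x \<subseteq> space \<Omega>"
    using sets_C[OF x] by (rule sets.sets_into_space)
  then have "agree x i = C x \<inter> {a \<in> space \<Omega>. decode a ! i = x ! i}"
    and "disagree x i = C x \<inter> {a \<in> space \<Omega>. decode a ! i \<noteq> x ! i}"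
    by (auto simp: agree_def disagree_def)
  then show "agree x i \<in> sets \<Omega>" "disagree x i \<in> sets \<Omega>"
    using sets_C[OF x] sets_decode_pred by auto
qed

lemma measure_C_split:
  assumes x: "length x = d"
  shows "measure (P x) (C x) = measure (P x) (agree x i) + measure (P x) (disagree x i)"
proof -
  interpret prob_space "P x"
    using prob_space_P[OF x] .
  have "C x = agree x i \<union> disagree x i" "agree x i \<inter> disagree x i = {}"
    by (auto simp: agree_def disagree_def)
  then show ?thesis
    using sets_agree[OF x] sets_disagree[OF x] sets_P[OF x] by (simp add: finite_measure_Union)
qed

lemma sum_disagree_le:
  assumes x: "length x = d"
  shows "(\<Sum>i<d. measure (P x) (disagree x i)) \<le> K"
proof -
  interpret prob_space "P x"
    using prob_space_P[OF x] .
  show ?thesis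
  proof (rule sum_prob_le_of_overlap)
    fix \<omega>
    show "real (card {i \<in> {..<d}. \<omega> \<in> disagree x i}) \<le> K"
    proof (cases "\<omega> \<in> C x")
      case True
      have "card {i \<in> {..<d}. \<omega> \<in> disagree x i} \<le> hamming x (decode \<omega>)"
        unfolding hamming_def by (rule card_mono) (auto simp: disagree_def x)
      then show ?thesis
        using hamming_decode_le[OF True x] by linarith
    qed (use K_nonneg in \<open>simp add: disagree_def\<close>)
  qed (use sets_disagree[OF x] sets_P[OF x] in auto)
qed

text \<open>An outcome agreeing with flip z i at coordinate i disagrees with z there; since all these
  outcomes lie in one accurate set C (flip z i0), there are at most K + 1 such coordinates.\<close>
lemma sum_agree_flip_le:
  assumes z: "length z = d"
  shows "(\<Sum>i<d. measure (P z) (agree (flip z i) i)) \<le> K + 1"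
proof -
  interpret prob_space "P z"
    using prob_space_P[OF z] .
  show ?thesis
  proof (rule sum_prob_le_of_overlap)
    fix \<omega>
    show "real (card {i \<in> {..<d}. \<omega> \<in> agree (flip z i) i}) \<le> K + 1"
    proof (cases "{i \<in> {..<d}. \<omega> \<in> agree (flip z i) i} = {}")
      case True
      then show ?thesis
        using K_nonneg by (simp only: card.empty of_nat_0)
    next
      case False
      then obtain i0 where i0: "i0 < d" "\<omega> \<in> agree (flip z i0) i0"
        by auto
      let ?y = "flip z i0"
      have "card {i \<in> {..<d}. \<omega> \<in> agree (flip z i) i} \<le> card (insert i0 {j. j < d \<and> ?y ! j \<noteq> decode \<omega> ! j})"
        by (rule card_mono) (auto simp: agree_def z nth_flip)
      also have "\<dots> \<le> hamming ?y (decode \<omega>) + 1"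
        using card_insert_le_m1 by (simp add: hamming_def z card_insert_if)
      finally show ?thesis
        using hamming_decode_le[of \<omega> ?y] i0 z by (simp add: agree_def)
    qed
  qed (use sets_agree z sets_P[OF z] in auto)
qed

lemma accuracy_flip_le:
  assumes z: "length z = d" and i: "i < d"
  shows "\<beta> - measure (P (flip z i)) (disagree (flip z i) i) - \<delta> \<le> exp \<epsilon> * measure (P z) (agree (flip z i) i)"
  using accurate[of "flip z i"] measure_C_split[of "flip z i" i]
    privacy[of "flip z i" i "agree (flip z i) i"] sets_agree[of "flip z i" i] z i
  by simp

text \<open>Averaging over all x, the bijection z \<mapsto> flip z i turns the disagreement terms of
  accuracy_flip_le back into those of sum_disagree_le.\<close>
theorem dimension_bound: "real d * (\<beta> - \<delta>) \<le> K + exp \<epsilon> * (K + 1)"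
proof -
  define B where "B = {x :: bool list. length x = d}"
  define g where "g x i = measure (P x) (disagree x i)" for x i
  have "finite B" "B \<noteq> {}"
    using finite_lists_length_eq[of "UNIV :: bool set" d] by (auto simp: B_def intro: exI[of _ "replicate d False"])
  have per_z: "real d * (\<beta> - \<delta>) - (\<Sum>i<d. g (flip z i) i) \<le> exp \<epsilon> * (K + 1)" if "z \<in> B" for z
  proof -
    have "(\<Sum>i<d. \<beta> - g (flip z i) i - \<delta>) \<le> (\<Sum>i<d. exp \<epsilon> * measure (P z) (agree (flip z i) i))"
      using accuracy_flip_le that by (intro sum_mono) (auto simp: B_def g_def)
    also have "\<dots> \<le> exp \<epsilon> * (K + 1)"
      using sum_agree_flip_le that by (simp add: sum_distrib_left[symmetric] B_def)
    finally show ?thesis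
      by (simp add: sum_subtractf sum.distrib algebra_simps)
  qed
  have flip_reindex: "(\<Sum>z\<in>B. g (flip z i) i) = (\<Sum>x\<in>B. g x i)" for i
    by (rule sum.reindex_bij_witness[where i = "\<lambda>x. flip x i" and j = "\<lambda>x. flip x i"]) (auto simp: B_def)
  have "(\<Sum>z\<in>B. \<Sum>i<d. g (flip z i) i) = (\<Sum>i<d. \<Sum>z\<in>B. g (flip z i) i)"
    by (rule sum.swap)
  also have "\<dots> = (\<Sum>i<d. \<Sum>x\<in>B. g x i)"
    by (simp add: flip_reindex)
  also have "\<dots> = (\<Sum>x\<in>B. \<Sum>i<d. g x i)"
    by (rule sum.swap)
  also have "\<dots> \<le> (\<Sum>x\<in>B. K)"
    using sum_disagree_le by (intro sum_mono) (auto simp: B_def g_def)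
  finally have "(\<Sum>z\<in>B. \<Sum>i<d. g (flip z i) i) \<le> real (card B) * K"
    by simp
  moreover have "real (card B) * (real d * (\<beta> - \<delta>)) - (\<Sum>z\<in>B. \<Sum>i<d. g (flip z i) i)
      \<le> real (card B) * (exp \<epsilon> * (K + 1))"
    using sum_mono[of B _ "\<lambda>_. exp \<epsilon> * (K + 1)", OF per_z] by (simp add: sum_subtractf)
  ultimately have "real (card B) * (real d * (\<beta> - \<delta>)) \<le> real (card B) * (K + exp \<epsilon> * (K + 1))"
    by (simp add: distrib_left)
  moreover have "0 < real (card B)"
    using \<open>finite B\<close> \<open>B \<noteq> {}\<close> by (simp add: card_gt_0_iff)
  ultimately show ?thesis
    by simp
qed

end

section \<open>The attack streams\<close>

lemma topk_eq_sum_of_dominating: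
  fixes f :: "nat \<Rightarrow> real"
  assumes Q: "Q \<subseteq> {0..<n}" "card Q = k"
    and nonneg: "\<And>i. 0 \<le> f i"
    and dominating: "\<And>i j. i \<in> Q \<Longrightarrow> j \<in> {0..<n} - Q \<Longrightarrow> f j \<le> f i"
  shows "topk n f k = (\<Sum>i\<in>Q. f i)"
proof -
  let ?xs = "[0..<n]"
  let ?q = "map f (filter (\<lambda>i. i \<in> Q) ?xs)"
  let ?p = "map f (filter (\<lambda>i. i \<notin> Q) ?xs)"
  have set_q: "set (filter (\<lambda>i. i \<in> Q) ?xs) = Q"
    using Q by auto
  have "mset (map f ?xs) = mset (?p @ ?q)"
    using multiset_partition[of "mset ?xs" "\<lambda>i. i \<notin> Q"] by (metis image_mset_union mset_append mset_filter mset_map not_not)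
  moreover have "sorted (sort ?p @ sort ?q)"
    using dominating by (auto simp: sorted_append)
  ultimately have "sort (map f ?xs) = sort ?p @ sort ?q"
    by (intro properties_for_sort) auto
  moreover have "length ?q = k"
    using Q set_q distinct_card[of "filter (\<lambda>i. i \<in> Q) ?xs"] by simp
  ultimately have "topk n f k = sum_list (rev (sort ?q))"
    using nonneg by (simp add: topk_def)
  also have "\<dots> = sum_list ?q"
    by (metis mset_rev mset_sort sum_mset_sum_list)
  also have "\<dots> = (\<Sum>i\<in>Q. f i)"
    using set_q by (simp add: sum_list_distinct_conv_sum_set)
  finally show ?thesis .
qed

definition data_block :: "nat \<Rightarrow> bool list \<Rightarrow> nat option list" where
  "data_block m x = map (\<lambda>j. if x ! j then Some j else None) [0..<2^m]"

text \<open>Stage r tops up the elements outside walsh_support m (r - 1) and those inside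
  walsh_support m r, so that after stages 0, ..., r every element j < 2^m has been inserted
  r times, plus once more iff j is in walsh_support m r.\<close>
definition walsh_stage :: "nat \<Rightarrow> nat \<Rightarrow> nat option list" where
  "walsh_stage m r = map Some
     (filter (\<lambda>j. 0 < r \<and> j \<notin> walsh_support m (r - 1)) [0..<2^m] @
      filter (\<lambda>j. j \<in> walsh_support m r) [0..<2^m])"

definition attack_prefix :: "nat \<Rightarrow> bool list \<Rightarrow> nat \<Rightarrow> nat option list" where
  "attack_prefix m x r = data_block m x @ concat (map (walsh_stage m) [0..<Suc r])"

definition query_time :: "nat \<Rightarrow> nat \<Rightarrow> nat" where
  "query_time m r = 2^m + length (concat (map (walsh_stage m) [0..<Suc r]))"

definition attack_stream :: "nat \<Rightarrow> nat \<Rightarrow> bool list \<Rightarrow> nat option list" where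
  "attack_stream m T x =
     attack_prefix m x (2^m - 1) @ replicate (T - query_time m (2^m - 1)) None"

definition walsh_answer :: "nat \<Rightarrow> nat \<Rightarrow> bool list \<Rightarrow> real" where
  "walsh_answer m r x = (\<Sum>j\<in>walsh_support m r. of_bool (x ! j) + real r + 1)"

lemma length_data_block [simp]: "length (data_block m x) = 2^m"
  by (simp add: data_block_def)

lemma length_attack_prefix [simp]: "length (attack_prefix m x r) = query_time m r"
  by (simp add: attack_prefix_def query_time_def)

lemma attack_prefix_append:
  assumes "r \<le> r'"
  shows "attack_prefix m x r' = attack_prefix m x r @ concat (map (walsh_stage m) [Suc r..<Suc r'])"
proof -
  have "[0..<Suc r'] = [0..<Suc r] @ [Suc r..<Suc r']"
    using upt_add_eq_append[of 0 "Suc r" "r' - r"] assms by simp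
  then show ?thesis
    by (simp add: attack_prefix_def del: upt_Suc)
qed

lemma query_time_mono: "r \<le> r' \<Longrightarrow> query_time m r \<le> query_time m r'"
  using attack_prefix_append[of r r' m "[]"] length_attack_prefix[of m "[]"] by (metis le_add1 length_append)

lemma query_time_ge: "2^m \<le> query_time m r"
  by (simp add: query_time_def)

lemma query_time_last_le: "query_time m (2^m - 1) \<le> 3 * (2^m)\<^sup>2"
proof -
  have "length (walsh_stage m s) \<le> 2 * 2^m" for s
    unfolding walsh_stage_def length_map length_append
    using add_mono[OF length_filter_le length_filter_le, of _ "[0..<2^m]" _ "[0..<2^m]"] by (simp add: mult_2)
  then have "length (concat (map (walsh_stage m) [0..<2^m])) \<le> 2^m * (2 * 2^m)"
    using sum_list_mono[of "[0..<2^m]" "\<lambda>s. length (walsh_stage m s)" "\<lambda>_. 2 * 2^m"]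
    by (simp add: length_concat comp_def sum_list_triv)
  moreover have "Suc (2^m - 1) = 2^m"
    by simp
  ultimately show ?thesis
    unfolding query_time_def power2_eq_square using le_square[of "2^m"] by (simp only:)
qed

lemma take_attack_stream:
  assumes "r < 2^m"
  shows "take (query_time m r) (attack_stream m T x) = attack_prefix m x r"
proof -
  have "attack_stream m T x = attack_prefix m x r @
      concat (map (walsh_stage m) [Suc r..<2^m]) @ replicate (T - query_time m (2^m - 1)) None"
    using attack_prefix_append[of r "2^m - 1" m x] assms by (simp add: attack_stream_def)
  then show ?thesis
    by (metis append_eq_conv_conj length_attack_prefix)
qed

lemma attack_stream_eq: "attack_stream m T x = data_block m x @ drop (2^m) (attack_stream m T y)"
  by (simp add: attack_stream_def attack_prefix_def data_block_def)

lemma length_filter_upt: "length (filter P [0..<d]) = card {j. j < d \<and> P j}"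
  by (subst distinct_card[symmetric]) auto

lemma count_filter_upt_eq:
  "length (filter (\<lambda>j. P j \<and> j = i) [0..<d]) = (if i < d \<and> P i then 1 else 0)"
proof -
  have "{j. j < d \<and> P j \<and> j = i} = (if i < d \<and> P i then {i} else {})"
    by auto
  then show ?thesis
    by (simp add: length_filter_upt)
qed

lemma count_map_Some: "length (filter (\<lambda>y. y = Some i) (map Some xs)) = length (filter (\<lambda>j. j = i) xs)"
  by (induction xs) auto

lemma count_data_block:
  "length (filter (\<lambda>y. y = Some i) (data_block m x)) = (if i < 2^m \<and> x ! i then 1 else 0)"
proof -
  have "length (filter (\<lambda>y. y = Some i) (data_block m x)) = length (filter (\<lambda>j. x ! j \<and> j = i) [0..<2^m])"
    unfolding data_block_def by (simp add: filter_map comp_def) (metis option.distinct(1) option.inject)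
  then show ?thesis
    by (simp add: count_filter_upt_eq)
qed

lemma count_walsh_stage:
  "length (filter (\<lambda>y. y = Some i) (walsh_stage m r)) =
     (if i < 2^m then (if 0 < r \<and> i \<notin> walsh_support m (r - 1) then 1 else 0)
        + (if i \<in> walsh_support m r then 1 else 0) else 0)"
  unfolding walsh_stage_def count_map_Some
  by (simp only: filter_append length_append filter_filter count_filter_upt_eq) auto

lemma count_attack_prefix:
  "length (filter (\<lambda>y. y = Some i) (attack_prefix m x r)) =
     (if i < 2^m then (if x ! i then 1 else 0) + r + (if i \<in> walsh_support m r then 1 else 0) else 0)"
proof (induction r)
  case 0
  then show ?case
    by (simp add: attack_prefix_def count_data_block count_walsh_stage)
next
  case (Suc r)
  have "attack_prefix m x (Suc r) = attack_prefix m x r @ walsh_stage m (Suc r)"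
    by (simp add: attack_prefix_def)
  then show ?case
    using Suc by (simp add: count_walsh_stage)
qed

lemma freq_attack_stream:
  assumes "r < 2^m"
  shows "freq (attack_stream m T x) (query_time m r) i =
    (if i < 2^m then of_bool (x ! i) + real r + of_bool (i \<in> walsh_support m r) else 0)"
  using assms by (simp add: freq_def take_attack_stream count_attack_prefix)

lemma card_walsh_support: "card (walsh_support m r) \<in> {1..2^m}"
proof -
  have "0 \<in> walsh_support m r" "walsh_support m r \<subseteq> {..<2^m}"
    by (auto simp: walsh_support_def)
  then show ?thesis
    using card_mono[of "{..<2^m}" "walsh_support m r"] card_gt_0_iff[of "walsh_support m r"]
    by (auto simp: finite_subset)
qed

lemma topk_attack_stream:
  assumes r: "r < 2^m" and n: "2^m \<le> n"
  shows "topk n (freq (attack_stream m T x) (query_time m r)) (card (walsh_support m r)) = walsh_answer m r x"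
proof -
  let ?f = "freq (attack_stream m T x) (query_time m r)"
  have "topk n ?f (card (walsh_support m r)) = (\<Sum>i\<in>walsh_support m r. ?f i)"
  proof (rule topk_eq_sum_of_dominating)
    show "walsh_support m r \<subseteq> {0..<n}"
      using n by (auto simp: walsh_support_def)
    show "0 \<le> ?f i" for i
      by (simp add: freq_def)
    show "?f j \<le> ?f i" if "i \<in> walsh_support m r" "j \<in> {0..<n} - walsh_support m r" for i j
      using that r by (auto simp: freq_attack_stream walsh_support_def)
  qed simp
  also have "\<dots> = walsh_answer m r x"
    unfolding walsh_answer_def using r by (intro sum.cong refl) (auto simp: freq_attack_stream walsh_support_def)
  finally show ?thesis .
qed

lemma valid_attack_stream:
  assumes "2^m \<le> n" "query_time m (2^m - 1) \<le> T"
  shows "valid_stream n T (attack_stream m T x)"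
proof -
  have "set (attack_stream m T x) \<subseteq> insert None (Some ` {..<2^m})"
    by (auto simp: attack_stream_def attack_prefix_def data_block_def walsh_stage_def simp del: upt_Suc)
  then show ?thesis
    using assms by (force simp: valid_stream_def attack_stream_def)
qed

lemma nth_attack_stream_data: "j < 2^m \<Longrightarrow> attack_stream m T x ! j = (if x ! j then Some j else None)"
  by (subst attack_stream_eq[where y = x]) (simp add: nth_append data_block_def)

lemma nth_attack_stream_tail:
  assumes "2^m \<le> j"
  shows "attack_stream m T x ! j = attack_stream m T y ! j"
proof -
  have "2^m \<le> length (attack_stream m T y)"
    using query_time_ge[of m] by (simp add: attack_stream_def le_add1 trans_le_add1)
  then show ?thesis
    using assms by (subst attack_stream_eq[where y = y]) (simp add: nth_append)
qed

lemma length_attack_stream: "length (attack_stream m T x) = length (attack_stream m T y)"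
  by (simp add: attack_stream_def)

lemma neighbors_attack_stream:
  assumes "i < 2^m" "length x = 2^m"
  shows "neighbors (attack_stream m T x) (attack_stream m T (flip x i))"
proof -
  let ?u = "attack_stream m T x" and ?v = "attack_stream m T (flip x i)"
  have "?u ! j = ?v ! j" if "j \<noteq> i" for j
    using that assms nth_attack_stream_tail[of m j T x "flip x i"]
    by (cases "j < 2^m") (simp_all add: nth_attack_stream_data nth_flip)
  then have "{j. j < length ?u \<and> ?u ! j \<noteq> ?v ! j} \<subseteq> {i}"
    by blast
  then have "card {j. j < length ?u \<and> ?u ! j \<noteq> ?v ! j} \<le> 1"
    using card_mono[of "{i}"] by fastforce
  then show ?thesis
    by (simp add: neighbors_def length_attack_stream[of m T x "flip x i"])
qed

lemma hamming_le_of_walsh_answers: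
  assumes "\<forall>r<2^m. \<bar>a r - walsh_answer m r x\<bar> \<le> \<alpha>" "\<forall>r<2^m. \<bar>a r - walsh_answer m r y\<bar> \<le> \<alpha>"
    and "length x = 2^m"
  shows "real (hamming x y) \<le> 36 * \<alpha>\<^sup>2"
proof -
  define z where "z j = (of_bool (x ! j) - of_bool (y ! j) :: real)" for j
  have "(\<Sum>j<2^m. (z j)\<^sup>2) \<le> 9 * (2 * \<alpha>)\<^sup>2"
  proof (rule walsh_energy_le_of_support_sums)
    fix r :: nat assume "r < 2^m"
    have "(\<Sum>j\<in>walsh_support m r. z j) = walsh_answer m r x - walsh_answer m r y"
      by (simp add: walsh_answer_def z_def sum_subtractf[symmetric])
    then show "\<bar>\<Sum>j\<in>walsh_support m r. z j\<bar> \<le> 2 * \<alpha>"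
      using assms \<open>r < 2^m\<close> by fastforce
  qed
  moreover have "(\<Sum>j<2^m. (z j)\<^sup>2) = real (hamming x y)"
  proof -
    have "(\<Sum>j<2^m. (z j)\<^sup>2) = (\<Sum>j<2^m. of_bool (x ! j \<noteq> y ! j))"
      by (intro sum.cong refl) (simp add: z_def)
    also have "\<dots> = real (card ({..<2^m} \<inter> {j. x ! j \<noteq> y ! j}))"
      by simp
    also have "{..<2^m} \<inter> {j. x ! j \<noteq> y ! j} = {j. j < length x \<and> x ! j \<noteq> y ! j}"
      using assms(3) by auto
    finally show ?thesis
      by (simp add: hamming_def)
  qed
  ultimately show ?thesis
    by (simp add: power_mult_distrib)
qed

section \<open>The lower bound\<close>

lemma topk_accurate_nonneg:
  assumes "topk_accurate \<alpha> n T M" "mechanism n T M" "1 \<le> n" "1 \<le> T"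
  shows "0 \<le> \<alpha>"
proof -
  let ?u = "replicate T (None :: nat option)"
  have u: "valid_stream n T ?u"
    by (simp add: valid_stream_def)
  let ?A = "{a \<in> space (M ?u). \<forall>t\<in>{1..T}. \<forall>k\<in>{1..n}. \<bar>a t k - topk n (freq ?u t) k\<bar> \<le> \<alpha>}"
  have "2/3 \<le> measure (M ?u) ?A"
    using assms(1) u by (simp add: topk_accurate_def)
  moreover have "measure (M ?u) {} = 0"
    by simp
  ultimately have "?A \<noteq> {}"
    by (metis not_le zero_less_divide_iff zero_less_numeral)
  then obtain a where "\<bar>a 1 1 - topk n (freq ?u 1) 1\<bar> \<le> \<alpha>"
    using assms(3,4) by fastforce
  then show ?thesis
    by linarith
qed

lemma measurable_out_space_component:
  assumes "t \<in> {1..T}" "k \<in> {1..n}"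
  shows "(\<lambda>a. a t k) \<in> borel_measurable (out_space T n)"
  using measurable_comp[OF measurable_component_singleton[OF assms(1)] measurable_component_singleton[OF assms(2)]]
  by (simp add: out_space_def comp_def)

lemma query_time_in_horizon:
  assumes "r < 2^m" "query_time m (2^m - 1) \<le> T"
  shows "query_time m r \<in> {1..T}"
proof -
  have "query_time m r \<le> query_time m (2^m - 1)"
    using assms(1) by (intro query_time_mono) simp
  moreover have "1 \<le> query_time m r"
    using query_time_ge[of m r] by (metis one_le_numeral one_le_power order_trans)
  ultimately show ?thesis
    using assms(2) by simp
qed

definition walsh_consistent :: "nat \<Rightarrow> real \<Rightarrow> bool list \<Rightarrow> (nat \<Rightarrow> nat \<Rightarrow> real) set" where
  "walsh_consistent m \<alpha> x =
     {a. \<forall>r<2^m. \<bar>a (query_time m r) (card (walsh_support m r)) - walsh_answer m r x\<bar> \<le> \<alpha>}"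

lemma sets_walsh_consistent:
  assumes "2^m \<le> n" "query_time m (2^m - 1) \<le> T"
  shows "walsh_consistent m \<alpha> x \<inter> space (out_space T n) \<in> sets (out_space T n)"
proof -
  have "{a \<in> space (out_space T n). \<forall>r\<in>{..<2^m}. \<bar>a (query_time m r) (card (walsh_support m r)) - walsh_answer m r x\<bar> \<le> \<alpha>}
      \<in> sets (out_space T n)"
  proof (intro sets.sets_Collect_finite_All)
    fix r :: nat assume "r \<in> {..<2^m}"
    then have "(\<lambda>a. a (query_time m r) (card (walsh_support m r))) \<in> borel_measurable (out_space T n)"
      using assms card_walsh_support[of m r]
      by (intro measurable_out_space_component query_time_in_horizon) auto
    then have distance: "(\<lambda>a. \<bar>a (query_time m r) (card (walsh_support m r)) - walsh_answer m r x\<bar>)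
        \<in> borel_measurable (out_space T n)"
      by (intro borel_measurable_abs borel_measurable_diff) simp_all
    then have "(\<lambda>a. \<bar>a (query_time m r) (card (walsh_support m r)) - walsh_answer m r x\<bar>) -` {..\<alpha>}
        \<inter> space (out_space T n) \<in> sets (out_space T n)"
      by (rule measurable_sets) simp
    then show "{a \<in> space (out_space T n). \<bar>a (query_time m r) (card (walsh_support m r)) - walsh_answer m r x\<bar> \<le> \<alpha>}
        \<in> sets (out_space T n)"
      by (rule back_subst) auto
  qed simp
  moreover have "walsh_consistent m \<alpha> x \<inter> space (out_space T n) =
      {a \<in> space (out_space T n). \<forall>r\<in>{..<2^m}. \<bar>a (query_time m r) (card (walsh_support m r)) - walsh_answer m r x\<bar> \<le> \<alpha>}"
    by (auto simp: walsh_consistent_def)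
  ultimately show ?thesis
    by simp
qed

lemma measure_walsh_consistent:
  assumes n: "2^m \<le> n" and T: "query_time m (2^m - 1) \<le> T"
    and "mechanism n T M" and accurate: "topk_accurate \<alpha> n T M"
  shows "2/3 \<le> measure (M (attack_stream m T x)) (walsh_consistent m \<alpha> x \<inter> space (out_space T n))"
proof -
  let ?u = "attack_stream m T x"
  have u: "valid_stream n T ?u"
    using n T by (rule valid_attack_stream)
  interpret prob_space "M ?u"
    using assms(3) u by (simp add: mechanism_def)
  have sets: "sets (M ?u) = sets (out_space T n)"
    using assms(3) u by (simp add: mechanism_def)
  let ?A = "{a \<in> space (M ?u). \<forall>t\<in>{1..T}. \<forall>k\<in>{1..n}. \<bar>a t k - topk n (freq ?u t) k\<bar> \<le> \<alpha>}"
  have "2/3 \<le> prob ?A"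
    using accurate u by (simp add: topk_accurate_def)
  also have "\<dots> \<le> prob (walsh_consistent m \<alpha> x \<inter> space (out_space T n))"
  proof (rule finite_measure_mono)
    have "a \<in> walsh_consistent m \<alpha> x" if a: "a \<in> ?A" for a
    proof -
      have "\<bar>a (query_time m r) (card (walsh_support m r)) - walsh_answer m r x\<bar> \<le> \<alpha>" if r: "r < 2^m" for r
      proof -
        have "card (walsh_support m r) \<in> {1..n}"
          using card_walsh_support[of m r] n by auto
        then have "\<bar>a (query_time m r) (card (walsh_support m r)) -
            topk n (freq ?u (query_time m r)) (card (walsh_support m r))\<bar> \<le> \<alpha>"
          using a query_time_in_horizon[OF r T] by blast
        then show ?thesis
          using topk_attack_stream[OF r n] by simp
      qed
      then show ?thesis
        by (simp add: walsh_consistent_def)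
    qed
    then show "?A \<subseteq> walsh_consistent m \<alpha> x \<inter> space (out_space T n)"
      using sets_eq_imp_space_eq[OF sets] by blast
    show "walsh_consistent m \<alpha> x \<inter> space (out_space T n) \<in> events"
      using sets sets_walsh_consistent[OF n T] by simp
  qed
  finally show ?thesis .
qed

lemma attack_dimension_bound:
  assumes n: "2^m \<le> n" and T: "query_time m (2^m - 1) \<le> T"
    and "mechanism n T M" and dp: "event_dp \<epsilon> \<delta> n T M" and "topk_accurate \<alpha> n T M"
  shows "2^m * (2/3 - \<delta>) \<le> 36 * \<alpha>\<^sup>2 + exp \<epsilon> * (36 * \<alpha>\<^sup>2 + 1)"
proof -
  have valid: "valid_stream n T (attack_stream m T x)" for x
    using n T by (rule valid_attack_stream)
  interpret private_reconstruction "out_space T n" "\<lambda>x. M (attack_stream m T x)"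
    "\<lambda>x. walsh_consistent m \<alpha> x \<inter> space (out_space T n)" "2^m" \<epsilon> \<delta> "2/3" "36 * \<alpha>\<^sup>2"
  proof (rule private_reconstruction.intro)
    show "prob_space (M (attack_stream m T x))" "sets (M (attack_stream m T x)) = sets (out_space T n)"
      if "length x = 2^m" for x
      using assms(3) valid[of x] by (simp_all add: mechanism_def)
    show "walsh_consistent m \<alpha> x \<inter> space (out_space T n) \<in> sets (out_space T n)" if "length x = 2^m" for x
      using n T by (rule sets_walsh_consistent)
    show "2/3 \<le> measure (M (attack_stream m T x)) (walsh_consistent m \<alpha> x \<inter> space (out_space T n))"
      if "length x = 2^m" for x
      using n T assms(3,5) by (rule measure_walsh_consistent)
    show "measure (M (attack_stream m T x)) S \<le> exp \<epsilon> * measure (M (attack_stream m T (flip x i))) S + \<delta>"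
      if "length x = 2^m" "i < 2^m" "S \<in> sets (out_space T n)" for x i S
      using dp that valid neighbors_attack_stream[of i m x T] by (simp add: event_dp_def)
    show "real (hamming x y) \<le> 36 * \<alpha>\<^sup>2"
      if "length x = 2^m" "length y = 2^m" "a \<in> walsh_consistent m \<alpha> x \<inter> space (out_space T n)"
        "a \<in> walsh_consistent m \<alpha> y \<inter> space (out_space T n)" for x y a
      using that by (intro hamming_le_of_walsh_answers[where a = "\<lambda>r. a (query_time m r) (card (walsh_support m r))"])
        (auto simp: walsh_consistent_def)
  qed simp
  show ?thesis
    using dimension_bound by simp
qed

lemma ex_power_of_two_between:
  fixes X :: real
  assumes "1 \<le> X"
  shows "\<exists>m. 2^m \<le> X \<and> X < 2 * 2^m"
proof -
  define k where "k = \<lfloor>log 2 X\<rfloor>"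
  have "2 powr k \<le> X" "X < 2 powr (k + 1)"
    using floor_log_eq_powr_iff[of X 2 k] assms by (simp_all add: k_def)
  moreover have "0 \<le> k"
    using assms by (simp add: k_def)
  ultimately show ?thesis
    by (intro exI[of _ "nat k"]) (simp add: powr_add powr_realpow[symmetric])
qed

lemma sqrt_le_twice_sqrt_third: "sqrt x \<le> 2 * sqrt (x / 3)" if "0 \<le> x" for x :: real
proof -
  have "sqrt x = sqrt 3 * sqrt (x / 3)"
    by (simp add: real_sqrt_mult[symmetric])
  moreover have "sqrt 3 \<le> (2::real)"
    by (rule real_le_lsqrt) simp_all
  ultimately show ?thesis
    using that by (simp add: mult_right_mono)
qed

lemma ex_attack_size:
  fixes n T :: nat
  assumes n: "36 \<le> n" and T: "3888 \<le> T"
  shows "\<exists>m. 2^m \<le> n \<and> 3 * (2^m)\<^sup>2 \<le> T \<and> 18 < (2::real)^m \<and>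
    (min (real T powr (1/4)) (sqrt (real n)))\<^sup>2 < 4 * 2^m"
proof -
  define X where "X = min (real n) (sqrt (real T / 3))"
  have "36 \<le> sqrt (real T / 3)"
    using T by (intro real_le_rsqrt) simp
  then have "36 \<le> X"
    using n by (simp add: X_def)
  then obtain m where m: "2^m \<le> X" "X < 2 * 2^m"
    using ex_power_of_two_between[of X] by auto
  have "((2::real)^m)\<^sup>2 \<le> (sqrt (real T / 3))\<^sup>2"
    using m(1) by (intro power_mono) (simp_all add: X_def)
  then have "real (3 * (2^m)\<^sup>2) \<le> real T"
    by simp
  then have "3 * (2^m)\<^sup>2 \<le> T"
    by (simp only: of_nat_le_iff)
  moreover have "real (2^m) \<le> real n"
    using m(1) by (simp add: X_def)
  then have "2^m \<le> n"
    by (simp only: of_nat_le_iff)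
  moreover have "(min (real T powr (1/4)) (sqrt (real n)))\<^sup>2 \<le> 2 * X"
  proof -
    let ?Y = "min (real T powr (1/4)) (sqrt (real n))"
    have "?Y\<^sup>2 \<le> (real T powr (1/4))\<^sup>2" "?Y\<^sup>2 \<le> (sqrt (real n))\<^sup>2"
      by (intro power_mono; simp)+
    moreover have "(real T powr (1/4))\<^sup>2 = sqrt (real T)"
      by (simp add: power2_eq_square powr_add[symmetric] powr_half_sqrt)
    ultimately show ?thesis
      using sqrt_le_twice_sqrt_third[of "real T"] by (simp add: X_def)
  qed
  ultimately show ?thesis
    using m \<open>36 \<le> X\<close> by (intro exI[of _ m] conjI) linarith+
qed

lemma error_bound_of_dimension_bound:
  fixes d Y \<alpha> \<epsilon> \<delta> :: real
  assumes bound: "d * (2/3 - \<delta>) \<le> 36 * \<alpha>\<^sup>2 + exp \<epsilon> * (36 * \<alpha>\<^sup>2 + 1)"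
    and "0 \<le> \<alpha>" "\<epsilon> \<le> 1" "\<delta> \<le> 1/3" "18 < d" "Y\<^sup>2 < 4 * d"
  shows "Y \<le> 60 * \<alpha>"
proof -
  have "d * (1/3) \<le> d * (2/3 - \<delta>)"
    using assms by (intro mult_left_mono) simp_all
  also have "\<dots> \<le> 36 * \<alpha>\<^sup>2 + exp \<epsilon> * (36 * \<alpha>\<^sup>2 + 1)"
    by (fact bound)
  also have "\<dots> \<le> 36 * \<alpha>\<^sup>2 + 3 * (36 * \<alpha>\<^sup>2 + 1)"
  proof -
    have "exp \<epsilon> \<le> 3"
      using exp_le \<open>\<epsilon> \<le> 1\<close> by (meson exp_le_cancel_iff order_trans)
    then show ?thesis
      by (intro add_left_mono mult_right_mono) simp_all
  qed
  also have "\<dots> = 144 * \<alpha>\<^sup>2 + 3"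
    by simp
  finally have "Y\<^sup>2 \<le> 3600 * \<alpha>\<^sup>2"
    using \<open>18 < d\<close> \<open>Y\<^sup>2 < 4 * d\<close> zero_le_power2[of \<alpha>] by linarith
  then have "Y\<^sup>2 \<le> (60 * \<alpha>)\<^sup>2"
    by (simp add: power_mult_distrib)
  then show ?thesis
    using power2_le_imp_le[of Y "60 * \<alpha>"] \<open>0 \<le> \<alpha>\<close> by simp
qed

theorem mainTheorem15:
  shows "\<exists>c>0. \<exists>N::nat. \<forall>(n::nat) (T::nat) (\<epsilon>::real) (\<delta>::real) (\<alpha>::real) M.
     N \<le> n \<longrightarrow> N \<le> T \<longrightarrow> 0 \<le> \<epsilon> \<longrightarrow> \<epsilon> \<le> 1 \<longrightarrow> 0 \<le> \<delta> \<longrightarrow> \<delta> \<le> 1/3 \<longrightarrow>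
     mechanism n T M \<longrightarrow> continual n T M \<longrightarrow> event_dp \<epsilon> \<delta> n T M \<longrightarrow>
     topk_accurate \<alpha> n T M \<longrightarrow>
     \<alpha> \<ge> c * min (real T powr (1/4)) (sqrt (real n))"
proof (intro exI[of _ "1/60 :: real"] conjI exI[of _ "4000 :: nat"] allI impI)
  fix n T :: nat and \<epsilon> \<delta> \<alpha> :: real and M
  \<comment> \<open>The bound holds even without the hypothesis that M is continual.\<close>
  assume n: "4000 \<le> n" and T: "4000 \<le> T" and "0 \<le> \<epsilon>" "\<epsilon> \<le> 1" "0 \<le> \<delta>" "\<delta> \<le> 1/3"
    and mech: "mechanism n T M" and "continual n T M" and dp: "event_dp \<epsilon> \<delta> n T M"
    and acc: "topk_accurate \<alpha> n T M"
  define Y where "Y = min (real T powr (1/4)) (sqrt (real n))"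
  have "36 \<le> n" "3888 \<le> T"
    using n T by simp_all
  then obtain m where m: "2^m \<le> n" "3 * (2^m)\<^sup>2 \<le> T" "18 < (2::real)^m" "Y\<^sup>2 < 4 * 2^m"
    unfolding Y_def by (blast dest: ex_attack_size)
  have "query_time m (2^m - 1) \<le> T"
    using query_time_last_le m(2) by (rule le_trans)
  with m(1) have "2^m * (2/3 - \<delta>) \<le> 36 * \<alpha>\<^sup>2 + exp \<epsilon> * (36 * \<alpha>\<^sup>2 + 1)"
    using mech dp acc by (rule attack_dimension_bound)
  moreover have "0 \<le> \<alpha>"
    using acc mech by (rule topk_accurate_nonneg) (use n T in simp_all)
  ultimately have "Y \<le> 60 * \<alpha>"
    using m(3,4) \<open>\<epsilon> \<le> 1\<close> \<open>\<delta> \<le> 1/3\<close> by (intro error_bound_of_dimension_bound) simp_all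
  then show "1/60 * min (real T powr (1/4)) (sqrt (real n)) \<le> \<alpha>"
    unfolding Y_def by linarith
qed simp

end
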